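(* For every (finite, simple, undirected) graph $G$ with at least two vertices, $\kappa_2(\overleftrightarrow{G})=\kappa(G)$.
   Context: $\overleftrightarrow{G}$ denotes the complete biorientation of $G$: the digraph with vertex set $V(G)$ obtained by replacing each edge $xy$ of $G$ by the two arcs $xy$ and $yx$. For distinct vertices $x,y$ of $G$, $\kappa_{\{x,y\}}(G)$ is the maximum number of internally disjoint $x$–$y$ paths in $G$, and $\kappa(G)=\min\{\kappa_{\{x,y\}}(G): x,y\in V(G), x\ne y\}$ (so $\kappa(G)=0$ if $G$ is disconnected). A digraph is strong if for every ordered pair of vertices $u,v$ there is a directed path from $u$ to $v$. For a digraph $D$ and $S\subseteq V(D)$, strong subgraphs $D_1,\dots,D_p$ each containing $S$ are $S$-internally disjoint if $V(D_i)\cap V(D_j)=S$ and $A(D_i)\cap A(D_j)=\emptyset$ for $i<j$; $\kappa_S(D)$ is the maximum number of such subgraphs, and $\kappa_2(D)=\min\{\kappa_S(D): S\subseteq V(D), |S|=2\}$. *)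

theory Defs
  imports Main
begin

type_synonym 'a graph = "'a set \<times> 'a set set"
type_synonym 'a digraph = "'a set \<times> ('a \<times> 'a) set"

definition simple_graph :: "'a graph \<Rightarrow> bool" where
  "simple_graph G \<longleftrightarrow> finite (fst G) \<and>
     snd G \<subseteq> {{x, y} | x y. x \<in> fst G \<and> y \<in> fst G \<and> x \<noteq> y}"

definition is_path :: "'a graph \<Rightarrow> 'a \<Rightarrow> 'a \<Rightarrow> 'a list \<Rightarrow> bool" where
  "is_path G x y p \<longleftrightarrow> p \<noteq> [] \<and> hd p = x \<and> last p = y \<and> distinct p \<and>
     set p \<subseteq> fst G \<and> (\<forall>i < length p - 1. {p ! i, p ! Suc i} \<in> snd G)"

definition int_disjoint_paths :: "'a graph \<Rightarrow> 'a \<Rightarrow> 'a \<Rightarrow> 'a list set \<Rightarrow> bool" where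
  "int_disjoint_paths G x y P \<longleftrightarrow> finite P \<and> (\<forall>p\<in>P. is_path G x y p) \<and>
     (\<forall>p\<in>P. \<forall>q\<in>P. p \<noteq> q \<longrightarrow> set p \<inter> set q = {x, y})"

definition kappa_pair :: "'a graph \<Rightarrow> 'a \<Rightarrow> 'a \<Rightarrow> nat" where
  "kappa_pair G x y = Max {card P | P. int_disjoint_paths G x y P}"

definition kappa :: "'a graph \<Rightarrow> nat" where
  "kappa G = Min {kappa_pair G x y | x y. x \<in> fst G \<and> y \<in> fst G \<and> x \<noteq> y}"

definition biorient :: "'a graph \<Rightarrow> 'a digraph" where
  "biorient G = (fst G, {(x, y). {x, y} \<in> snd G})"

definition strong_subgraph :: "'a digraph \<Rightarrow> 'a digraph \<Rightarrow> bool" where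
  "strong_subgraph D H \<longleftrightarrow> fst H \<subseteq> fst D \<and> snd H \<subseteq> snd D \<inter> (fst H \<times> fst H) \<and>
     (\<forall>u\<in>fst H. \<forall>v\<in>fst H. (u, v) \<in> (snd H)\<^sup>*)"

definition S_int_disjoint :: "'a digraph \<Rightarrow> 'a set \<Rightarrow> nat \<Rightarrow> (nat \<Rightarrow> 'a digraph) \<Rightarrow> bool" where
  "S_int_disjoint D S p Ds \<longleftrightarrow>
     (\<forall>i<p. strong_subgraph D (Ds i) \<and> S \<subseteq> fst (Ds i)) \<and>
     (\<forall>i<p. \<forall>j<p. i < j \<longrightarrow> fst (Ds i) \<inter> fst (Ds j) = S \<and> snd (Ds i) \<inter> snd (Ds j) = {})"

definition kappa_S :: "'a digraph \<Rightarrow> 'a set \<Rightarrow> nat" where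
  "kappa_S D S = Max {p. \<exists>Ds. S_int_disjoint D S p Ds}"

definition kappa2 :: "'a digraph \<Rightarrow> nat" where
  "kappa2 D = Min {kappa_S D S | S. S \<subseteq> fst D \<and> card S = 2}"

end

theory Submission
  imports Defs
begin

text \<open>For a fixed pair {x, y}, internally disjoint x-y paths of G and
  {x, y}-internally disjoint strong subgraphs of the biorientation correspond in equal
  numbers: a path, with both orientations of each of its edges, is a strong subgraph, and
  a strong subgraph containing x and y contains a directed x-y path, i.e. a path of G.
  Two paths built this way are arc-disjoint unless both are the edge [x, y], and two
  paths extracted from different subgraphs are different for the same reason.
  Hence kappa_S and kappa_pair are maxima over the same set of numbers, and so
  kappa2 and kappa are minima over the same set.\<close>

lemma is_path_iff_successively:
  "is_path G x y p \<longleftrightarrow> p \<noteq> [] \<and> hd p = x \<and> last p = y \<and> distinct p \<and>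
     set p \<subseteq> fst G \<and> successively (\<lambda>u v. {u, v} \<in> snd G) p"
  unfolding is_path_def successively_conv_nth
  by (metis Suc_eq_plus1 less_diff_conv)

lemma distinct_hd_last_subset_doubleton:
  assumes "distinct q" "set q \<subseteq> {x, y}" "q \<noteq> []" "hd q = x" "last q = y" "x \<noteq> y"
  shows "q = [x, y]"
proof -
  have "length q \<le> 2"
    using assms(1,2,6) by (metis card_2_iff card_mono distinct_card finite.emptyI finite.insertI)
  then show ?thesis
    using assms by (cases q rule: remdups_adj.cases) (auto simp: le_Suc_eq)
qed

lemma successively_set_subset:
  assumes "successively (\<lambda>u v. (u, v) \<in> A) q" "q \<noteq> []" "hd q \<in> V" "A \<subseteq> V \<times> V"
  shows "set q \<subseteq> V"
  using assms by (induction q rule: induct_list012) auto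

lemma rtrancl_imp_distinct_path:
  assumes "(x, y) \<in> A\<^sup>*"
  shows "\<exists>p. p \<noteq> [] \<and> hd p = x \<and> last p = y \<and> distinct p \<and>
    successively (\<lambda>u v. (u, v) \<in> A) p"
  using assms
proof (induction rule: converse_rtrancl_induct)
  case base
  show ?case by (intro exI[of _ "[y]"]) auto
next
  case (step x z)
  then obtain p where p: "p \<noteq> []" "hd p = z" "last p = y" "distinct p"
    "successively (\<lambda>u v. (u, v) \<in> A) p" by blast
  show ?case
  proof (cases "x \<in> set p")
    case True
    then obtain ys zs where "p = ys @ x # zs" by (meson split_list)
    then show ?thesis
      using p by (intro exI[of _ "x # zs"]) (auto simp: successively_append_iff)
  next
    case False
    then show ?thesis
      using p step(1) by (intro exI[of _ "x # p"]) (auto simp: successively_Cons)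
  qed
qed

fun path_arcs :: "'a list \<Rightarrow> ('a \<times> 'a) set" where
  "path_arcs (a # b # xs) = {(a, b), (b, a)} \<union> path_arcs (b # xs)"
| "path_arcs _ = {}"

lemma path_arcs_subset: "path_arcs q \<subseteq> set q \<times> set q"
  by (induction q rule: path_arcs.induct) auto

lemma path_arcs_subset_biorient:
  "successively (\<lambda>u v. {u, v} \<in> E) q \<Longrightarrow> path_arcs q \<subseteq> {(u, v). {u, v} \<in> E}"
  by (induction q rule: path_arcs.induct) (auto simp: insert_commute)

lemma converse_path_arcs: "(path_arcs q)\<inverse> = path_arcs q"
  by (induction q rule: path_arcs.induct) auto

lemma hd_rtrancl_path_arcs: "u \<in> set q \<Longrightarrow> (hd q, u) \<in> (path_arcs q)\<^sup>*"
proof (induction q rule: path_arcs.induct)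
  case (1 a b xs)
  show ?case
  proof (cases "u = a")
    case False
    then have "(b, u) \<in> (path_arcs (b # xs))\<^sup>*"
      using 1 by simp
    moreover have "(path_arcs (b # xs))\<^sup>* \<subseteq> (path_arcs (a # b # xs))\<^sup>*"
      by (rule rtrancl_mono) auto
    ultimately show ?thesis
      by (auto intro: converse_rtrancl_into_rtrancl)
  qed simp
qed auto

lemma path_arcs_rtrancl:
  assumes "u \<in> set q" "v \<in> set q"
  shows "(u, v) \<in> (path_arcs q)\<^sup>*"
proof -
  have "(u, hd q) \<in> ((path_arcs q)\<inverse>)\<^sup>*"
    using hd_rtrancl_path_arcs[OF assms(1)] by (rule rtrancl_converseI)
  then have "(u, hd q) \<in> (path_arcs q)\<^sup>*"
    by (simp add: converse_path_arcs)
  then show ?thesis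
    using hd_rtrancl_path_arcs[OF assms(2)] by (rule rtrancl_trans)
qed

lemma path_arcs_irrefl: "distinct q \<Longrightarrow> (u, u) \<notin> path_arcs q"
  by (induction q rule: path_arcs.induct) auto

lemma path_arcs_between_ends:
  assumes "distinct q" "hd q = x" "last q = y" "(x, y) \<in> path_arcs q \<or> (y, x) \<in> path_arcs q"
  shows "q = [x, y]"
proof -
  obtain b rest where q: "q = x # b # rest"
    using assms(2,4) by (cases q rule: path_arcs.cases) auto
  have "x \<notin> set (b # rest)"
    using assms(1) q by auto
  then have "(x, y) \<notin> path_arcs (b # rest) \<and> (y, x) \<notin> path_arcs (b # rest)"
    using path_arcs_subset[of "b # rest"] by blast
  then have "b = y"
    using assms(4) q by auto
  moreover have "rest = []"
  proof (rule ccontr)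
    assume "rest \<noteq> []"
    then have "y \<in> set rest"
      using assms(3) q by (metis last.simps last_in_set list.distinct(1))
    then show False
      using assms(1) q \<open>b = y\<close> by simp
  qed
  ultimately show ?thesis
    using q by simp
qed

lemma path_arcs_disjoint:
  assumes "is_path G x y q" "is_path G x y r" "q \<noteq> r" "set q \<inter> set r = {x, y}"
  shows "path_arcs q \<inter> path_arcs r = {}"
proof (rule ccontr)
  assume "path_arcs q \<inter> path_arcs r \<noteq> {}"
  then obtain u v where uv: "(u, v) \<in> path_arcs q" "(u, v) \<in> path_arcs r"
    by auto
  have "u \<in> {x, y}" "v \<in> {x, y}"
    using uv path_arcs_subset assms(4) by blast+
  moreover have "u \<noteq> v"
    using uv(1) assms(1) path_arcs_irrefl unfolding is_path_def by metis
  ultimately have "(x, y) \<in> path_arcs q \<or> (y, x) \<in> path_arcs q"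
    "(x, y) \<in> path_arcs r \<or> (y, x) \<in> path_arcs r"
    using uv by auto
  then have "q = [x, y]" "r = [x, y]"
    using assms(1,2) path_arcs_between_ends unfolding is_path_def by metis+
  then show False
    using assms(3) by simp
qed

lemma strong_subgraph_path:
  assumes "is_path G x y q"
  shows "strong_subgraph (biorient G) (set q, path_arcs q)"
proof -
  have "set q \<subseteq> fst G" "successively (\<lambda>u v. {u, v} \<in> snd G) q"
    using assms unfolding is_path_iff_successively by auto
  then show ?thesis
    unfolding strong_subgraph_def biorient_def
    using path_arcs_subset[of q] path_arcs_subset_biorient path_arcs_rtrancl by fastforce
qed

lemma int_disjoint_paths_imp_S_int_disjoint:
  assumes "int_disjoint_paths G x y P"
  shows "\<exists>Ds. S_int_disjoint (biorient G) {x, y} (card P) Ds"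
proof -
  have paths: "\<And>q. q \<in> P \<Longrightarrow> is_path G x y q"
    and disjoint: "\<And>q r. q \<in> P \<Longrightarrow> r \<in> P \<Longrightarrow> q \<noteq> r \<Longrightarrow> set q \<inter> set r = {x, y}"
    using assms unfolding int_disjoint_paths_def by blast+
  have "finite P"
    using assms unfolding int_disjoint_paths_def by blast
  then obtain f where f: "bij_betw f {0..<card P} P"
    using ex_bij_betw_nat_finite by blast
  then have fP: "\<And>i. i < card P \<Longrightarrow> f i \<in> P"
    using bij_betwE by fastforce
  have ends: "{x, y} \<subseteq> set q" if "q \<in> P" for q
    using paths[OF that] unfolding is_path_def
    by (metis empty_subsetI hd_in_set insert_subset last_in_set)
  have f_inj: "f i \<noteq> f j" if "i < card P" "j < card P" "i < j" for i j
    using f that unfolding bij_betw_def inj_on_def by (metis atLeastLessThan_iff less_irrefl zero_le)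
  have "S_int_disjoint (biorient G) {x, y} (card P) (\<lambda>i. (set (f i), path_arcs (f i)))"
    unfolding S_int_disjoint_def
  proof (intro conjI allI impI)
    fix i assume "i < card P"
    then have "f i \<in> P"
      by (rule fP)
    then show "strong_subgraph (biorient G) (set (f i), path_arcs (f i))"
      and "{x, y} \<subseteq> fst (set (f i), path_arcs (f i))"
      using paths[THEN strong_subgraph_path] ends by simp_all
  next
    fix i j assume ij: "i < card P" "j < card P" "i < j"
    then have "f i \<in> P" "f j \<in> P" "f i \<noteq> f j"
      using fP f_inj by simp_all
    then have "set (f i) \<inter> set (f j) = {x, y}"
      by (rule disjoint)
    then show "fst (set (f i), path_arcs (f i)) \<inter> fst (set (f j), path_arcs (f j)) = {x, y}"
      and "snd (set (f i), path_arcs (f i)) \<inter> snd (set (f j), path_arcs (f j)) = {}"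
      using path_arcs_disjoint[OF paths paths \<open>f i \<noteq> f j\<close>] \<open>f i \<in> P\<close> \<open>f j \<in> P\<close>
      by simp_all
  qed
  then show ?thesis by blast
qed

lemma strong_subgraph_biorient_has_path:
  assumes "strong_subgraph (biorient G) H" "x \<in> fst H" "y \<in> fst H"
  obtains q where "is_path G x y q" "set q \<subseteq> fst H" "successively (\<lambda>u v. (u, v) \<in> snd H) q"
proof -
  have sub: "fst H \<subseteq> fst G" "snd H \<subseteq> {(u, v). {u, v} \<in> snd G}" "snd H \<subseteq> fst H \<times> fst H"
    using assms(1) unfolding strong_subgraph_def biorient_def by auto
  have "(x, y) \<in> (snd H)\<^sup>*"
    using assms unfolding strong_subgraph_def by blast
  then obtain q where q: "q \<noteq> []" "hd q = x" "last q = y" "distinct q"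
    "successively (\<lambda>u v. (u, v) \<in> snd H) q"
    by (blast dest: rtrancl_imp_distinct_path)
  have "set q \<subseteq> fst H"
    using successively_set_subset[OF q(5,1)] q(2) assms(2) sub(3) by blast
  moreover have "successively (\<lambda>u v. {u, v} \<in> snd G) q"
    using q(5) sub(2) by (auto elim!: successively_mono)
  ultimately show thesis
    using that q sub(1) unfolding is_path_iff_successively by auto
qed

lemma paths_in_disjoint_subgraphs_differ:
  assumes "is_path G x y q" "x \<noteq> y"
    and "set q \<subseteq> V\<^sub>1" "successively (\<lambda>u v. (u, v) \<in> A\<^sub>1) q"
    and "set q \<subseteq> V\<^sub>2" "successively (\<lambda>u v. (u, v) \<in> A\<^sub>2) q"
    and "V\<^sub>1 \<inter> V\<^sub>2 = {x, y}" "A\<^sub>1 \<inter> A\<^sub>2 = {}"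
  shows False
proof -
  have "set q \<subseteq> {x, y}"
    using assms(3,5,7) by blast
  then have "q = [x, y]"
    using assms(1,2) distinct_hd_last_subset_doubleton unfolding is_path_def by metis
  then show False
    using assms(4,6,8) by auto
qed

lemma S_int_disjoint_imp_int_disjoint_paths:
  assumes "S_int_disjoint (biorient G) {x, y} p Ds" "x \<noteq> y"
  shows "\<exists>P. int_disjoint_paths G x y P \<and> card P = p"
proof -
  have strong: "strong_subgraph (biorient G) (Ds i)" "{x, y} \<subseteq> fst (Ds i)" if "i < p" for i
    using assms(1) that unfolding S_int_disjoint_def by blast+
  have disjoint: "fst (Ds i) \<inter> fst (Ds j) = {x, y}" "snd (Ds i) \<inter> snd (Ds j) = {}"
    if "i < p" "j < p" "i \<noteq> j" for i j
    using assms(1) that unfolding S_int_disjoint_def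
    by (metis Int_commute linorder_neqE_nat)+
  define good where "good i q \<longleftrightarrow> is_path G x y q \<and> set q \<subseteq> fst (Ds i) \<and>
    successively (\<lambda>u v. (u, v) \<in> snd (Ds i)) q" for i q
  have "\<exists>q. good i q" if i: "i < p" for i
  proof -
    have "x \<in> fst (Ds i)" "y \<in> fst (Ds i)"
      using strong(2)[OF i] by simp_all
    then obtain q where "is_path G x y q" "set q \<subseteq> fst (Ds i)"
      "successively (\<lambda>u v. (u, v) \<in> snd (Ds i)) q"
      by (rule strong_subgraph_biorient_has_path[OF strong(1)[OF i]])
    then show ?thesis
      unfolding good_def by blast
  qed
  then obtain \<pi> where \<pi>: "\<And>i. i < p \<Longrightarrow> good i (\<pi> i)"
    by metis
  have "inj_on \<pi> {..<p}"
  proof (rule inj_onI, rule ccontr)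
    fix i j assume "i \<in> {..<p}" "j \<in> {..<p}" "\<pi> i = \<pi> j" "i \<noteq> j"
    then show False
      using \<pi>[of i] \<pi>[of j] disjoint[of i j] assms(2)
        paths_in_disjoint_subgraphs_differ[of G x y "\<pi> i"]
      unfolding good_def by auto
  qed
  moreover have "int_disjoint_paths G x y (\<pi> ` {..<p})"
    unfolding int_disjoint_paths_def
  proof (intro conjI ballI impI)
    fix q r assume "q \<in> \<pi> ` {..<p}" "r \<in> \<pi> ` {..<p}" "q \<noteq> r"
    then obtain i j where ij: "i < p" "j < p" "i \<noteq> j" "q = \<pi> i" "r = \<pi> j"
      by auto
    have "{x, y} \<subseteq> set q" "{x, y} \<subseteq> set r"
      using \<pi> ij unfolding good_def is_path_def
      by (metis empty_subsetI hd_in_set insert_subset last_in_set)+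
    then show "set q \<inter> set r = {x, y}"
      using \<pi>[of i] \<pi>[of j] disjoint[OF ij(1-3)] ij unfolding good_def by blast
  qed (use \<pi> good_def in auto)
  ultimately show ?thesis
    by (metis card_image card_lessThan)
qed

lemma kappa_S_biorient_eq_kappa_pair:
  assumes "x \<noteq> y"
  shows "kappa_S (biorient G) {x, y} = kappa_pair G x y"
proof -
  have "{p. \<exists>Ds. S_int_disjoint (biorient G) {x, y} p Ds} = {card P | P. int_disjoint_paths G x y P}"
  proof (intro set_eqI iffI)
    fix p assume "p \<in> {p. \<exists>Ds. S_int_disjoint (biorient G) {x, y} p Ds}"
    then obtain Ds where "S_int_disjoint (biorient G) {x, y} p Ds"
      by blast
    then have "\<exists>P. int_disjoint_paths G x y P \<and> card P = p"
      using assms by (rule S_int_disjoint_imp_int_disjoint_paths)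
    then show "p \<in> {card P | P. int_disjoint_paths G x y P}"
      by blast
  qed (auto dest: int_disjoint_paths_imp_S_int_disjoint)
  then show ?thesis
    unfolding kappa_S_def kappa_pair_def by simp
qed

theorem theorem2p5:
  fixes G :: "'a graph"
  assumes "simple_graph G" and "card (fst G) \<ge> 2"
  shows "kappa2 (biorient G) = kappa G"
proof -
  have "{kappa_S (biorient G) S | S. S \<subseteq> fst (biorient G) \<and> card S = 2}
      = {kappa_S (biorient G) {x, y} | x y. x \<in> fst G \<and> y \<in> fst G \<and> x \<noteq> y}"
    unfolding biorient_def card_2_iff by auto
  also have "\<dots> = {kappa_pair G x y | x y. x \<in> fst G \<and> y \<in> fst G \<and> x \<noteq> y}"
    by (rule Collect_cong) (metis kappa_S_biorient_eq_kappa_pair)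
  finally show ?thesis
    unfolding kappa2_def kappa_def by simp
qed

end
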